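(* Define $G(k,T)=v(k,T)-\min_{a\in\{0,1,\dots,k\}}[v(k-a,T)+F(a)]$. Then for every $T\ge0$, the map $k\mapsto G(k,T)$ is non-decreasing.
   Context: Let $\lambda>0$ and let $N$ be a Poisson process with intensity $\lambda$, arrival times $0<\sigma_1<\sigma_2<\cdots$, and natural filtration $\mathcal F_t=\sigma(N_s:s\le t)$. Let $F:[0,\infty)\to[0,\infty)$ be strictly increasing and strictly convex with $F(0)=0$. For $k\in\{0,1,\dots\}$ let $\mathcal A_k$ be the set of $(\mathcal F_t)$-adapted, integer-valued, nonnegative, non-increasing processes $\xi$ with $\xi_0=k$ whose values change only at arrival times of $N$, and $v(k,T)=\inf_{\xi\in\mathcal A_k}\mathbb E[\sum_{i:\sigma_i\le T}F(\xi_{\sigma_i-}-\xi_{\sigma_i})+F(\xi_T)]$ (so $v(0,T)=0$). *)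

theory Defs
  imports "HOL-Probability.Probability"
begin

definition strictly_convex_on :: "real set \<Rightarrow> (real \<Rightarrow> real) \<Rightarrow> bool" where
  "strictly_convex_on S f \<longleftrightarrow> (\<forall>x\<in>S. \<forall>y\<in>S. x \<noteq> y \<longrightarrow> (\<forall>u::real. 0 < u \<and> u < 1 \<longrightarrow>
      f (u * x + (1 - u) * y) < u * f x + (1 - u) * f y))"

text \<open>A Poisson process of intensity lam on the probability space M, given through its
  interarrival times tau 0, tau 1, ...: they are independent and exponentially
  distributed with rate lam.\<close>
definition poisson_interarrivals :: "'w measure \<Rightarrow> real \<Rightarrow> (nat \<Rightarrow> 'w \<Rightarrow> real) \<Rightarrow> bool" where
  "poisson_interarrivals M lam tau \<longleftrightarrow>
     prob_space M \<and> 0 < lam \<and>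
     prob_space.indep_vars M (\<lambda>_. borel) tau UNIV \<and>
     (\<forall>i. distributed M lborel (tau i) (exponential_density lam))"

definition arrival :: "(nat \<Rightarrow> 'w \<Rightarrow> real) \<Rightarrow> nat \<Rightarrow> 'w \<Rightarrow> real" where
  "arrival tau i w = (\<Sum>j<i. tau j w)"

definition counting :: "(nat \<Rightarrow> 'w \<Rightarrow> real) \<Rightarrow> real \<Rightarrow> 'w \<Rightarrow> nat" where
  "counting tau t w = card {i. 1 \<le> i \<and> arrival tau i w \<le> t}"

definition nat_filtration :: "'w measure \<Rightarrow> (nat \<Rightarrow> 'w \<Rightarrow> real) \<Rightarrow> real \<Rightarrow> 'w measure" where
  "nat_filtration M tau t = sigma (space M)
     (\<Union>s\<in>{0..t}. {counting tau s -` A \<inter> space M | A. True})"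

text \<open>Admissible strategies A_k: adapted, nat-valued (so integer and nonnegative),
  non-increasing, starting at k, and changing only at arrival times.\<close>
definition admissible :: "'w measure \<Rightarrow> (nat \<Rightarrow> 'w \<Rightarrow> real) \<Rightarrow> nat \<Rightarrow> (real \<Rightarrow> 'w \<Rightarrow> nat) set" where
  "admissible M tau k = {\<xi>.
     (\<forall>t\<ge>0. \<xi> t \<in> measurable (nat_filtration M tau t) (count_space UNIV)) \<and>
     (\<forall>w\<in>space M. \<xi> 0 w = k) \<and>
     (\<forall>w\<in>space M. \<forall>s t. 0 \<le> s \<and> s \<le> t \<longrightarrow> \<xi> t w \<le> \<xi> s w) \<and>
     (\<forall>w\<in>space M. \<forall>s t. 0 \<le> s \<and> s \<le> t \<and>
        (\<forall>i\<ge>1. \<not> (s < arrival tau i w \<and> arrival tau i w \<le> t)) \<longrightarrow> \<xi> s w = \<xi> t w)}"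

definition left_lim :: "(real \<Rightarrow> nat) \<Rightarrow> real \<Rightarrow> real" where
  "left_lim f t = Lim (at_left t) (\<lambda>s. real (f s))"

definition cost :: "'w measure \<Rightarrow> (nat \<Rightarrow> 'w \<Rightarrow> real) \<Rightarrow> (real \<Rightarrow> real) \<Rightarrow> real \<Rightarrow> (real \<Rightarrow> 'w \<Rightarrow> nat) \<Rightarrow> ennreal" where
  "cost M tau F T \<xi> = (\<integral>\<^sup>+ w.
      (\<Sum>i. if 1 \<le> i \<and> arrival tau i w \<le> T
             then ennreal (F (left_lim (\<lambda>t. \<xi> t w) (arrival tau i w) - real (\<xi> (arrival tau i w) w)))
             else 0)
      + ennreal (F (real (\<xi> T w))) \<partial>M)"

text \<open>Value function v(k,T) (finite since the strategy xi = k costs F(k)).\<close>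
definition value_fn :: "'w measure \<Rightarrow> (nat \<Rightarrow> 'w \<Rightarrow> real) \<Rightarrow> (real \<Rightarrow> real) \<Rightarrow> nat \<Rightarrow> real \<Rightarrow> real" where
  "value_fn M tau F k T = enn2real (INF \<xi>\<in>admissible M tau k. cost M tau F T \<xi>)"

definition G_fn :: "'w measure \<Rightarrow> (nat \<Rightarrow> 'w \<Rightarrow> real) \<Rightarrow> (real \<Rightarrow> real) \<Rightarrow> nat \<Rightarrow> real \<Rightarrow> real" where
  "G_fn M tau F k T = value_fn M tau F k T
     - Min ((\<lambda>a. value_fn M tau F (k - a) T + F (real a)) ` {0..k})"

end

theory Submission
  imports Defs
begin

text \<open>
  For a \<le> k the value function satisfies v(k) + v(k+1-a) \<le> v(k+1) + v(k-a).  Given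
  strategies \<xi> from k+1 and \<eta> from k-a, the pathwise minimum min(\<xi>, \<eta>+a) starts at k
  and max(\<xi>, \<eta>+a) - a starts at k+1-a.  At every arrival their two jumps have the same
  sum as the jumps of \<xi> and \<eta> and lie between them, so by convexity of F they cost no
  more, and the same holds for the final liquidation.  If a minimises v(k-a) + F(a), then
  using the same a at k+1 shows G(k) \<le> G(k+1).
\<close>

lemma strictly_convex_onD:
  assumes "strictly_convex_on S f" "x \<in> S" "y \<in> S" "x \<noteq> y" "0 < u" "u < 1"
  shows "f (u * x + (1 - u) * y) < u * f x + (1 - u) * f y"
  using assms unfolding strictly_convex_on_def by blast

lemma strictly_convex_on_imp_convex_on:
  assumes f: "strictly_convex_on S f" and S: "convex S"
  shows "convex_on S f"
proof (rule convex_on_linorderI[OF _ S])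
  fix t x y :: real
  assume "0 < t" "t < 1" "x \<in> S" "y \<in> S" "x < y"
  then have "f ((1 - t) * x + (1 - (1 - t)) * y) < (1 - t) * f x + (1 - (1 - t)) * f y"
    by (intro strictly_convex_onD[OF f]) auto
  then show "f ((1 - t) *\<^sub>R x + t *\<^sub>R y) \<le> (1 - t) * f x + t * f y"
    by simp
qed

lemma convex_on_exchange:
  fixes f :: "real \<Rightarrow> real"
  assumes f: "convex_on S f" and S: "p \<in> S" "q \<in> S" and r: "p \<le> r" "r \<le> q"
  shows "f r + f (p + q - r) \<le> f p + f q"
proof (cases "p = q")
  case True
  with r show ?thesis by simp
next
  case False
  define t where "t = (r - p) / (q - p)"
  have t: "0 \<le> t" "t \<le> 1" "t * (q - p) = r - p"
    using r False by (auto simp: t_def field_simps)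
  have r_eq: "r = (1 - t) *\<^sub>R p + t *\<^sub>R q"
    and reflected_eq: "p + q - r = (1 - (1 - t)) *\<^sub>R p + (1 - t) *\<^sub>R q"
    using t(3) by (simp_all add: algebra_simps)
  have "f r \<le> (1 - t) * f p + t * f q"
    unfolding r_eq using convex_onD[OF f] t S by blast
  moreover have "f (p + q - r) \<le> (1 - (1 - t)) * f p + (1 - t) * f q"
    unfolding reflected_eq using convex_onD[OF f, of "1 - t"] t S by simp
  ultimately show ?thesis
    by (simp add: algebra_simps)
qed

lemma convex_on_min_max_increments:
  fixes F :: "real \<Rightarrow> real"
  assumes F: "convex_on {0..} F" and "x1 \<le> x0" "y1 \<le> y0"
  shows "F (min x0 y0 - min x1 y1) + F (max x0 y0 - max x1 y1) \<le> F (x0 - x1) + F (y0 - y1)"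
proof -
  have ordered: "F (min x0 y0 - min x1 y1) + F (max x0 y0 - max x1 y1) \<le> F (x0 - x1) + F (y0 - y1)"
    if "x1 \<le> x0" "y1 \<le> y0" "x1 \<le> y1" for x0 x1 y0 y1 :: real
  proof (cases "x0 \<le> y0")
    case True
    with that show ?thesis by simp
  next
    case False
    have "F (y0 - x1) + F ((y0 - y1) + (x0 - x1) - (y0 - x1)) \<le> F (y0 - y1) + F (x0 - x1)"
      using that False by (intro convex_on_exchange[OF F]) auto
    with that False show ?thesis by (simp add: add.commute)
  qed
  show ?thesis
  proof (cases "x1 \<le> y1")
    case True
    with ordered assms show ?thesis by blast
  next
    case False
    with ordered[of y1 y0 x1 x0] assms show ?thesis
      by (simp add: min.commute max.commute add.commute)
  qed
qed

lemma convex_on_min_max_increments_nat: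
  fixes F :: "real \<Rightarrow> real" and x0 x1 y0 y1 a :: nat
  assumes F: "convex_on {0..} F" and "x1 \<le> x0" "y1 \<le> y0"
  shows "F (real (min x0 (y0 + a)) - real (min x1 (y1 + a)))
       + F (real (max x0 (y0 + a) - a) - real (max x1 (y1 + a) - a))
     \<le> F (real x0 - real x1) + F (real y0 - real y1)"
proof -
  have max_minus: "real (max u (v + a) - a) = max (real u) (real v + a) - a" for u v
    by (simp add: of_nat_diff of_nat_max le_max_iff_disj)
  from convex_on_min_max_increments[OF F, of "real x1" "real x0" "real y1 + a" "real y0 + a"] assms
  show ?thesis by (simp add: of_nat_min max_minus)
qed

lemma ennreal_add_le_add:
  fixes a b c d :: real
  assumes "0 \<le> a" "0 \<le> b" "0 \<le> c" "0 \<le> d" "a + b \<le> c + d"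
  shows "ennreal a + ennreal b \<le> ennreal c + ennreal d"
proof -
  have "ennreal a + ennreal b = ennreal (a + b)"
    using assms by (simp add: ennreal_plus)
  also have "\<dots> \<le> ennreal (c + d)"
    using assms(5) by (rule ennreal_leI)
  also have "\<dots> = ennreal c + ennreal d"
    using assms by (simp add: ennreal_plus)
  finally show ?thesis .
qed

text \<open>
  The cost of a strategy in terms of its jump chain: x i is the position held from the
  i-th arrival time s i until the next one, and y is the position left at the horizon T.
\<close>
definition chain_cost :: "(real \<Rightarrow> real) \<Rightarrow> real \<Rightarrow> (nat \<Rightarrow> real) \<Rightarrow> (nat \<Rightarrow> nat) \<Rightarrow> nat \<Rightarrow> ennreal"
  where "chain_cost F T s x y =
    (\<Sum>i. if 1 \<le> i \<and> s i \<le> T then ennreal (F (real (x (i - 1)) - real (x i))) else 0)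
    + ennreal (F (real y))"

lemma chain_cost_min_max_le:
  fixes F :: "real \<Rightarrow> real" and x x' :: "nat \<Rightarrow> nat"
  assumes F: "convex_on {0..} F" "\<forall>z\<ge>0. 0 \<le> F z"
    and x: "\<And>i. x (Suc i) \<le> x i" and x': "\<And>i. x' (Suc i) \<le> x' i"
  shows "chain_cost F T s (\<lambda>i. min (x i) (x' i + a)) (min y (y' + a))
       + chain_cost F T s (\<lambda>i. max (x i) (x' i + a) - a) (max y (y' + a) - a)
     \<le> chain_cost F T s x y + chain_cost F T s x' y'"
proof -
  have jumps: "ennreal (F (real (min x0 (y0 + a)) - real (min x1 (y1 + a))))
      + ennreal (F (real (max x0 (y0 + a) - a) - real (max x1 (y1 + a) - a)))
    \<le> ennreal (F (real x0 - real x1)) + ennreal (F (real y0 - real y1))"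
    if "x1 \<le> x0" "y1 \<le> y0" for x0 x1 y0 y1
    using that
    by (intro ennreal_add_le_add convex_on_min_max_increments_nat[OF F(1)] F(2)[rule_format])
      (auto simp: min_def max_def of_nat_diff)
  define f where "f u i = (if 1 \<le> i \<and> s i \<le> T
    then ennreal (F (real (u (i - 1)) - real (u i))) else 0)" for u :: "nat \<Rightarrow> nat" and i
  have "f (\<lambda>i. min (x i) (x' i + a)) i + f (\<lambda>i. max (x i) (x' i + a) - a) i \<le> f x i + f x' i"
    for i
    using jumps[OF x x'] by (cases i) (simp_all add: f_def)
  then have "(\<Sum>i. f (\<lambda>i. min (x i) (x' i + a)) i + f (\<lambda>i. max (x i) (x' i + a) - a) i)
      \<le> (\<Sum>i. f x i + f x' i)"
    by (intro suminf_le) auto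
  then have sums: "suminf (f (\<lambda>i. min (x i) (x' i + a))) + suminf (f (\<lambda>i. max (x i) (x' i + a) - a))
      \<le> suminf (f x) + suminf (f x')"
    by (simp add: suminf_add)
  have terminal: "ennreal (F (real (min y (y' + a)))) + ennreal (F (real (max y (y' + a) - a)))
      \<le> ennreal (F (real y)) + ennreal (F (real y'))"
    using jumps[of 0 y 0 y'] by simp
  have chain_cost_eq: "chain_cost F T s u z = suminf (f u) + ennreal (F (real z))" for u z
    by (simp add: chain_cost_def f_def[abs_def])
  have interchange: "a + b + (c + d) = a + c + (b + d)" for a b c d :: ennreal
    by (simp add: ac_simps)
  show ?thesis
    unfolding chain_cost_eq using add_mono[OF sums terminal] by (metis interchange)
qed

definition step_path :: "(nat \<Rightarrow> real) \<Rightarrow> nat \<Rightarrow> (real \<Rightarrow> nat) \<Rightarrow> bool"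
  where "step_path s k p \<longleftrightarrow> p 0 = k \<and> (\<forall>u v. 0 \<le> u \<and> u \<le> v \<longrightarrow> p v \<le> p u) \<and>
    (\<forall>u v. 0 \<le> u \<and> u \<le> v \<and> (\<forall>i\<ge>1. \<not> (u < s i \<and> s i \<le> v)) \<longrightarrow> p u = p v)"

lemma admissible_step_path:
  assumes "\<xi> \<in> admissible M tau k" "w \<in> space M"
  shows "step_path (\<lambda>i. arrival tau i w) k (\<lambda>t. \<xi> t w)"
  using assms unfolding admissible_def step_path_def by auto

lemma step_path_constant:
  assumes p: "step_path s k p" and s: "strict_mono s" "s 0 = 0"
    and q: "s i \<le> q" "q < s (Suc i)"
  shows "p q = p (s i)"
proof -
  have "0 \<le> s i"
    using s strict_mono_less_eq[of s 0 i] by simp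
  moreover have "\<not> (s i < s j \<and> s j \<le> q)" for j
  proof
    assume "s i < s j \<and> s j \<le> q"
    then have "Suc i \<le> j"
      using strict_mono_less[OF s(1)] by (simp add: Suc_le_eq)
    then have "s (Suc i) \<le> s j"
      using strict_mono_less_eq[OF s(1)] by blast
    with \<open>s i < s j \<and> s j \<le> q\<close> q show False
      by simp
  qed
  ultimately show ?thesis
    using p q unfolding step_path_def by metis
qed

lemma step_path_antimono:
  assumes p: "step_path s k p" and s: "strict_mono s" "s 0 = 0"
  shows "p (s (Suc i)) \<le> p (s i)"
proof -
  have "0 \<le> s i" "s i \<le> s (Suc i)"
    using s strict_mono_less_eq[OF s(1)] by (metis le0, metis le_SucI order_refl)
  with p show ?thesis
    unfolding step_path_def by blast
qed

lemma step_path_left_lim: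
  assumes p: "step_path s k p" and s: "strict_mono s" "s 0 = 0"
  shows "left_lim p (s (Suc i)) = real (p (s i))"
  unfolding left_lim_def
proof (rule tendsto_Lim)
  have "s i < s (Suc i)"
    using strict_mono_less[OF s(1)] by blast
  then have "\<forall>\<^sub>F q in at_left (s (Suc i)). q \<in> {s i<..<s (Suc i)}"
    by (rule eventually_at_left_real)
  then have "\<forall>\<^sub>F q in at_left (s (Suc i)). real (p q) = real (p (s i))"
    by eventually_elim (use step_path_constant[OF p s] in auto)
  then show "((\<lambda>q. real (p q)) \<longlongrightarrow> real (p (s i))) (at_left (s (Suc i)))"
    by (rule tendsto_eventually)
qed simp

lemma arrival_0 [simp]: "arrival tau 0 w = 0"
  by (simp add: arrival_def)

lemma strict_mono_arrival:
  assumes "\<And>j. 0 < tau j w"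
  shows "strict_mono (\<lambda>i. arrival tau i w)"
  using assms by (intro strict_monoI_Suc) (simp add: arrival_def)

lemma measurable_interarrival:
  assumes "poisson_interarrivals M lam tau"
  shows "tau j \<in> borel_measurable M"
proof -
  have "distributed M lborel (tau j) (exponential_density lam)"
    using assms by (simp add: poisson_interarrivals_def)
  then have "tau j \<in> measurable M lborel"
    by (rule distributed_measurable)
  then show ?thesis
    by simp
qed

lemma measurable_arrival:
  assumes "poisson_interarrivals M lam tau"
  shows "arrival tau i \<in> borel_measurable M"
  unfolding arrival_def[abs_def] using measurable_interarrival[OF assms] by auto

lemma measurable_counting:
  assumes "poisson_interarrivals M lam tau"
  shows "counting tau s \<in> measurable M (count_space UNIV)"
proof -
  note [measurable] = measurable_arrival[OF assms]
  show ?thesis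
    unfolding counting_def[abs_def] by measurable
qed

lemma measurable_from_nat_filtration:
  assumes pi: "poisson_interarrivals M lam tau"
    and f: "f \<in> measurable (nat_filtration M tau t) N"
  shows "f \<in> measurable M N"
proof (rule measurable_from_subalg[OF _ f])
  let ?A = "\<Union>s\<in>{0..t}. {counting tau s -` A \<inter> space M | A. True}"
  have "?A \<subseteq> sets M"
    using measurable_sets[OF measurable_counting[OF pi]] by auto
  moreover from this have "?A \<subseteq> Pow (space M)"
    using sets.sets_into_space by blast
  ultimately show "subalgebra M (nat_filtration M tau t)"
    unfolding subalgebra_def nat_filtration_def by (simp add: sets.sigma_sets_subset)
qed

lemma admissible_measurable:
  assumes "poisson_interarrivals M lam tau" "\<xi> \<in> admissible M tau k" "0 \<le> t"
  shows "\<xi> t \<in> measurable M (count_space UNIV)"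
proof -
  have "\<xi> t \<in> measurable (nat_filtration M tau t) (count_space UNIV)"
    using assms(2,3) by (simp add: admissible_def)
  then show ?thesis
    by (rule measurable_from_nat_filtration[OF assms(1)])
qed

lemma AE_interarrivals_pos:
  assumes pi: "poisson_interarrivals M lam tau"
  shows "AE w in M. \<forall>j. 0 < tau j w"
proof -
  interpret prob_space M
    using pi by (simp add: poisson_interarrivals_def)
  have "AE w in M. 0 < tau j w" for j
  proof -
    note [measurable] = measurable_interarrival[OF pi]
    have "distributed M lborel (tau j) (exponential_density lam)" "0 < lam"
      using pi by (auto simp: poisson_interarrivals_def)
    from exponential_distributedD_le[OF this(1) order.refl this(2)]
    have "prob {w \<in> space M. tau j w \<le> 0} = 0"
      by simp
    then have "{w \<in> space M. tau j w \<le> 0} \<in> null_sets M"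
      by (simp add: emeasure_eq_measure null_sets_def)
    then show ?thesis
      by (rule AE_I') auto
  qed
  then show ?thesis
    by (simp add: AE_all_countable)
qed

lemma measurable_compose_countable2:
  fixes h :: "'i::countable \<Rightarrow> 'j::countable \<Rightarrow> 'b"
  assumes f: "f \<in> measurable M (count_space UNIV)" and g: "g \<in> measurable M (count_space UNIV)"
    and h: "\<And>a b. h a b \<in> space N"
  shows "(\<lambda>w. h (f w) (g w)) \<in> measurable M N"
proof (rule measurable_compose_countable[where f = "\<lambda>a w. h a (g w)", OF _ f])
  show "(\<lambda>w. h a (g w)) \<in> measurable M N" for a
    using measurable_compose_countable[OF _ g, of "\<lambda>b w. h a b" N] h by simp
qed

text \<open>
  The jump chain of a strategy, sampled at the arrival times.  On the null set where some
  interarrival time vanishes it is set to 0, which keeps it measurable.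
\<close>
definition arrival_sample :: "(nat \<Rightarrow> 'w \<Rightarrow> real) \<Rightarrow> (real \<Rightarrow> 'w \<Rightarrow> nat) \<Rightarrow> nat \<Rightarrow> 'w \<Rightarrow> nat"
  where "arrival_sample tau \<xi> i w = (if \<forall>j. 0 < tau j w then \<xi> (arrival tau i w) w else 0)"

lemma measurable_arrival_sample:
  assumes pi: "poisson_interarrivals M lam tau" and adm: "\<xi> \<in> admissible M tau k"
  shows "arrival_sample tau \<xi> i \<in> measurable M (count_space UNIV)"
  unfolding measurable_count_space_eq2_countable
proof safe
  fix n :: nat
  note [measurable] = measurable_arrival[OF pi] measurable_interarrival[OF pi]
  let ?G = "{w \<in> space M. \<forall>j. 0 < tau j w}"
  let ?Between = "\<lambda>q. {w \<in> space M. arrival tau i w \<le> q \<and> q < arrival tau (Suc i) w \<and> \<xi> q w = n}"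
  have sample_iff: "\<xi> (arrival tau i w) w = n \<longleftrightarrow> (\<exists>q\<in>\<rat> \<inter> {0..}. w \<in> ?Between q)"
    if w: "w \<in> ?G" for w
  proof -
    let ?s = "\<lambda>i. arrival tau i w"
    have p: "step_path ?s k (\<lambda>t. \<xi> t w)"
      using admissible_step_path[OF adm] w by blast
    have s: "strict_mono ?s" "?s 0 = 0"
      using w strict_mono_arrival[of tau w] by auto
    show ?thesis
    proof
      assume sample: "\<xi> (?s i) w = n"
      obtain r where r: "r \<in> \<rat>" "?s i < r" "r < ?s (Suc i)"
        using Rats_dense_in_real strict_mono_less[OF s(1)] by blast
      have "0 \<le> ?s i"
        using s strict_mono_less_eq[of ?s 0 i] by simp
      moreover have "\<xi> r w = n"
        using step_path_constant[OF p s, of i r] r sample by simp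
      ultimately have "r \<in> \<rat> \<inter> {0..}" "w \<in> ?Between r"
        using r w by auto
      then show "\<exists>q\<in>\<rat> \<inter> {0..}. w \<in> ?Between q" ..
    next
      assume "\<exists>q\<in>\<rat> \<inter> {0..}. w \<in> ?Between q"
      then obtain q where "?s i \<le> q" "q < ?s (Suc i)" "\<xi> q w = n"
        by blast
      then show "\<xi> (?s i) w = n"
        using step_path_constant[OF p s, of i q] by simp
    qed
  qed
  have "arrival_sample tau \<xi> i -` {n} \<inter> space M
      = (?G \<inter> (\<Union>q\<in>\<rat> \<inter> {0..}. ?Between q)) \<union> (if n = 0 then space M - ?G else {})"
  proof (intro set_eqI)
    fix w
    show "w \<in> arrival_sample tau \<xi> i -` {n} \<inter> space M \<longleftrightarrow>
        w \<in> (?G \<inter> (\<Union>q\<in>\<rat> \<inter> {0..}. ?Between q)) \<union> (if n = 0 then space M - ?G else {})"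
    proof (cases "w \<in> ?G")
      case True
      then show ?thesis
        using sample_iff[OF True] by (simp add: arrival_sample_def)
    next
      case False
      then show ?thesis
        by (auto simp: arrival_sample_def)
    qed
  qed
  also have "\<dots> \<in> sets M"
  proof -
    have "?Between q \<in> sets M" if "q \<in> \<rat> \<inter> {0..}" for q
    proof -
      have "0 \<le> q"
        using that by simp
      note [measurable] = admissible_measurable[OF pi adm this]
      show ?thesis
        by measurable
    qed
    then have "(\<Union>q\<in>\<rat> \<inter> {0..}. ?Between q) \<in> sets M"
      by (intro sets.countable_UN' countable_Int1 countable_rat) auto
    moreover have "?G \<in> sets M"
      by measurable
    ultimately show ?thesis
      by auto
  qed
  finally show "arrival_sample tau \<xi> i -` {n} \<inter> space M \<in> sets M" .
qed auto

lemma cost_eq_chain_cost: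
  assumes pi: "poisson_interarrivals M lam tau" and adm: "\<xi> \<in> admissible M tau k"
  shows "cost M tau F T \<xi> = (\<integral>\<^sup>+ w. chain_cost F T (\<lambda>i. arrival tau i w)
      (\<lambda>i. arrival_sample tau \<xi> i w) (\<xi> T w) \<partial>M)"
  unfolding cost_def chain_cost_def
proof (rule nn_integral_cong_AE)
  show "AE w in M.
    (\<Sum>i. if 1 \<le> i \<and> arrival tau i w \<le> T
      then ennreal (F (left_lim (\<lambda>t. \<xi> t w) (arrival tau i w) - real (\<xi> (arrival tau i w) w)))
      else 0) + ennreal (F (real (\<xi> T w))) =
    (\<Sum>i. if 1 \<le> i \<and> arrival tau i w \<le> T
      then ennreal (F (real (arrival_sample tau \<xi> (i - 1) w) - real (arrival_sample tau \<xi> i w)))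
      else 0) + ennreal (F (real (\<xi> T w)))"
    using AE_interarrivals_pos[OF pi] AE_space
  proof eventually_elim
    case (elim w)
    have p: "step_path (\<lambda>i. arrival tau i w) k (\<lambda>t. \<xi> t w)"
      using admissible_step_path[OF adm elim(2)] .
    have s: "strict_mono (\<lambda>i. arrival tau i w)" "arrival tau 0 w = 0"
      using elim(1) strict_mono_arrival[of tau w] by auto
    have "left_lim (\<lambda>t. \<xi> t w) (arrival tau i w) - real (\<xi> (arrival tau i w) w)
        = real (arrival_sample tau \<xi> (i - 1) w) - real (arrival_sample tau \<xi> i w)" if "1 \<le> i" for i
      using that elim(1) step_path_left_lim[OF p s, of "i - 1"] by (simp add: arrival_sample_def)
    then show ?case
      by (simp cong: if_cong)
  qed
qed

lemma measurable_chain_cost: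
  assumes pi: "poisson_interarrivals M lam tau" and adm: "\<xi> \<in> admissible M tau k" and T: "0 \<le> T"
  shows "(\<lambda>w. chain_cost F T (\<lambda>i. arrival tau i w) (\<lambda>i. arrival_sample tau \<xi> i w) (\<xi> T w))
    \<in> borel_measurable M"
proof -
  note [measurable] = measurable_arrival[OF pi]
  have [measurable]: "(\<lambda>w. ennreal (F (real (arrival_sample tau \<xi> (i - 1) w)
      - real (arrival_sample tau \<xi> i w)))) \<in> borel_measurable M" for i
    by (rule measurable_compose_countable2
        [OF measurable_arrival_sample[OF pi adm] measurable_arrival_sample[OF pi adm]]) simp
  have [measurable]: "(\<lambda>w. ennreal (F (real (\<xi> T w)))) \<in> borel_measurable M"
    using measurable_compose_countable[OF _ admissible_measurable[OF pi adm T],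
        of "\<lambda>a w. ennreal (F (real a))" borel] by simp
  show ?thesis
    unfolding chain_cost_def by measurable
qed

lemma admissible_combine_mono:
  fixes h :: "nat \<Rightarrow> nat \<Rightarrow> nat"
  assumes x: "\<xi> \<in> admissible M tau k1" and e: "\<eta> \<in> admissible M tau k2"
    and h: "\<And>u v u' v'. u' \<le> u \<Longrightarrow> v' \<le> v \<Longrightarrow> h u' v' \<le> h u v"
  shows "(\<lambda>t w. h (\<xi> t w) (\<eta> t w)) \<in> admissible M tau (h k1 k2)"
  unfolding admissible_def
proof (intro CollectI conjI allI impI ballI)
  fix t :: real
  assume "0 \<le> t"
  with x e have "\<xi> t \<in> measurable (nat_filtration M tau t) (count_space UNIV)"
    "\<eta> t \<in> measurable (nat_filtration M tau t) (count_space UNIV)"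
    by (simp_all add: admissible_def)
  then show "(\<lambda>w. h (\<xi> t w) (\<eta> t w)) \<in> measurable (nat_filtration M tau t) (count_space UNIV)"
    by (rule measurable_compose_countable2) simp
next
  fix w
  assume "w \<in> space M"
  from admissible_step_path[OF x this] admissible_step_path[OF e this]
  have px: "step_path (\<lambda>i. arrival tau i w) k1 (\<lambda>t. \<xi> t w)"
    and pe: "step_path (\<lambda>i. arrival tau i w) k2 (\<lambda>t. \<eta> t w)" .
  then show "h (\<xi> 0 w) (\<eta> 0 w) = h k1 k2"
    by (simp add: step_path_def)
  fix u v :: real
  show "h (\<xi> v w) (\<eta> v w) \<le> h (\<xi> u w) (\<eta> u w)" if "0 \<le> u \<and> u \<le> v"
    using px pe that by (intro h) (simp_all add: step_path_def)
  show "h (\<xi> u w) (\<eta> u w) = h (\<xi> v w) (\<eta> v w)"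
    if "0 \<le> u \<and> u \<le> v \<and> (\<forall>i\<ge>1. \<not> (u < arrival tau i w \<and> arrival tau i w \<le> v))"
  proof -
    have "\<xi> u w = \<xi> v w" "\<eta> u w = \<eta> v w"
      using px pe that unfolding step_path_def by blast+
    then show ?thesis
      by simp
  qed
qed

lemma admissible_min_shift:
  assumes "\<xi> \<in> admissible M tau k1" "\<eta> \<in> admissible M tau k2"
  shows "(\<lambda>t w. min (\<xi> t w) (\<eta> t w + a)) \<in> admissible M tau (min k1 (k2 + a))"
  using admissible_combine_mono[OF assms, of "\<lambda>u v. min u (v + a)"]
  by (meson add_right_mono min.mono)

lemma admissible_max_shift:
  assumes "\<xi> \<in> admissible M tau k1" "\<eta> \<in> admissible M tau k2"
  shows "(\<lambda>t w. max (\<xi> t w) (\<eta> t w + a) - a) \<in> admissible M tau (max k1 (k2 + a) - a)"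
  using admissible_combine_mono[OF assms, of "\<lambda>u v. max u (v + a) - a"]
  by (meson add_right_mono diff_le_mono max.mono)

lemma admissible_const: "(\<lambda>t w. k) \<in> admissible M tau k"
  unfolding admissible_def by auto

lemma cost_min_max_le:
  fixes F :: "real \<Rightarrow> real"
  assumes pi: "poisson_interarrivals M lam tau" and T: "0 \<le> T"
    and F: "convex_on {0..} F" "\<forall>z\<ge>0. 0 \<le> F z"
    and x: "\<xi> \<in> admissible M tau k1" and e: "\<eta> \<in> admissible M tau k2"
  shows "cost M tau F T (\<lambda>t w. min (\<xi> t w) (\<eta> t w + a))
       + cost M tau F T (\<lambda>t w. max (\<xi> t w) (\<eta> t w + a) - a)
     \<le> cost M tau F T \<xi> + cost M tau F T \<eta>"
proof -
  let ?mn = "\<lambda>t w. min (\<xi> t w) (\<eta> t w + a)" and ?mx = "\<lambda>t w. max (\<xi> t w) (\<eta> t w + a) - a"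
  note mn = admissible_min_shift[OF x e, of a] and mx = admissible_max_shift[OF x e, of a]
  define C where "C \<zeta> w = chain_cost F T (\<lambda>i. arrival tau i w)
    (\<lambda>i. arrival_sample tau \<zeta> i w) (\<zeta> T w)" for \<zeta> w
  have cost_C: "cost M tau F T \<zeta> = (\<integral>\<^sup>+ w. C \<zeta> w \<partial>M)" and C_measurable: "C \<zeta> \<in> borel_measurable M"
    if "\<zeta> \<in> admissible M tau k" for \<zeta> k
    unfolding C_def using cost_eq_chain_cost[OF pi that] measurable_chain_cost[OF pi that T] by auto
  have "AE w in M. C ?mn w + C ?mx w \<le> C \<xi> w + C \<eta> w"
    using AE_interarrivals_pos[OF pi] AE_space
  proof eventually_elim
    case (elim w)
    have s: "strict_mono (\<lambda>i. arrival tau i w)" "arrival tau 0 w = 0"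
      using elim(1) strict_mono_arrival[of tau w] by auto
    have "arrival_sample tau \<zeta> (Suc i) w \<le> arrival_sample tau \<zeta> i w"
      if "\<zeta> \<in> admissible M tau k" for \<zeta> k i
      using elim(1) step_path_antimono[OF admissible_step_path[OF that elim(2)] s]
      by (simp add: arrival_sample_def)
    from chain_cost_min_max_le[OF F, where x = "\<lambda>i. arrival_sample tau \<xi> i w"
        and x' = "\<lambda>i. arrival_sample tau \<eta> i w", OF this[OF x] this[OF e]] elim(1)
    show ?case
      by (simp add: C_def arrival_sample_def)
  qed
  then have "(\<integral>\<^sup>+ w. C ?mn w + C ?mx w \<partial>M) \<le> (\<integral>\<^sup>+ w. C \<xi> w + C \<eta> w \<partial>M)"
    by (rule nn_integral_mono_AE)
  then show ?thesis
    using C_measurable[OF mn] C_measurable[OF mx] C_measurable[OF x] C_measurable[OF e]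
    by (simp add: cost_C[OF mn] cost_C[OF mx] cost_C[OF x] cost_C[OF e] nn_integral_add)
qed

lemma INF_add_const_ennreal:
  fixes f :: "'a \<Rightarrow> ennreal"
  assumes "A \<noteq> {}"
  shows "(INF x\<in>A. f x + c) = (INF x\<in>A. f x) + c"
  using continuous_at_Inf_mono[of "\<lambda>x. x + c" "f ` A"]
    continuous_add[of "at_right (Inf (f ` A))" "\<lambda>x. x" "\<lambda>x. c"] assms
  by (auto simp: mono_def image_comp)

lemma le_INF_add_INF_ennreal:
  fixes f g :: "'a \<Rightarrow> ennreal"
  assumes "A \<noteq> {}" "B \<noteq> {}" and le: "\<And>x y. x \<in> A \<Longrightarrow> y \<in> B \<Longrightarrow> L \<le> f x + g y"
  shows "L \<le> (INF x\<in>A. f x) + (INF y\<in>B. g y)"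
proof -
  have "L \<le> (INF x\<in>A. f x) + g y" if "y \<in> B" for y
    using le that by (auto simp: INF_add_const_ennreal[OF assms(1), symmetric] intro: INF_greatest)
  then have "L \<le> (INF y\<in>B. (INF x\<in>A. f x) + g y)"
    by (auto intro: INF_greatest)
  also have "\<dots> = (INF x\<in>A. f x) + (INF y\<in>B. g y)"
    using INF_add_const_ennreal[OF assms(2), of g "INF x\<in>A. f x"] by (simp add: ac_simps)
  finally show ?thesis .
qed

lemma cost_constant_strategy:
  assumes "poisson_interarrivals M lam tau" "F 0 = 0"
  shows "cost M tau F T (\<lambda>t w. k) = ennreal (F (real k))"
proof -
  interpret prob_space M
    using assms(1) by (simp add: poisson_interarrivals_def)
  have "left_lim (\<lambda>t. k) s = real k" for s
    unfolding left_lim_def by (intro tendsto_Lim) auto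
  then show ?thesis
    using assms(2) by (simp add: cost_def emeasure_space_1 cong: if_cong)
qed

lemma value_fn_submodular:
  fixes F :: "real \<Rightarrow> real"
  assumes pi: "poisson_interarrivals M lam tau" and T: "0 \<le> T"
    and F: "convex_on {0..} F" "\<forall>z\<ge>0. 0 \<le> F z" "F 0 = 0" and a: "a \<le> k"
  shows "value_fn M tau F k T + value_fn M tau F (Suc k - a) T
    \<le> value_fn M tau F (Suc k) T + value_fn M tau F (k - a) T"
proof -
  define V where "V j = (INF \<xi>\<in>admissible M tau j. cost M tau F T \<xi>)" for j
  have admissible_nonempty: "admissible M tau j \<noteq> {}" for j
    using admissible_const by blast
  have finite: "V j < \<top>" for j
  proof -
    have "V j \<le> ennreal (F (real j))"
      unfolding V_def cost_constant_strategy[of M lam tau F T j, OF pi F(3), symmetric]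
      by (rule INF_lower) (rule admissible_const)
    then show ?thesis
      using ennreal_less_top order_le_less_trans by blast
  qed
  have "V k + V (Suc k - a) \<le> V (Suc k) + V (k - a)"
    unfolding V_def
  proof (rule le_INF_add_INF_ennreal[OF admissible_nonempty admissible_nonempty])
    fix \<xi> \<eta>
    assume x: "\<xi> \<in> admissible M tau (Suc k)" and e: "\<eta> \<in> admissible M tau (k - a)"
    have "min (Suc k) (k - a + a) = k" "max (Suc k) (k - a + a) - a = Suc k - a"
      using a by auto
    then have "(INF \<xi>\<in>admissible M tau k. cost M tau F T \<xi>)
        + (INF \<xi>\<in>admissible M tau (Suc k - a). cost M tau F T \<xi>)
      \<le> cost M tau F T (\<lambda>t w. min (\<xi> t w) (\<eta> t w + a))
        + cost M tau F T (\<lambda>t w. max (\<xi> t w) (\<eta> t w + a) - a)"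
      using admissible_min_shift[OF x e, of a] admissible_max_shift[OF x e, of a]
      by (intro add_mono INF_lower) auto
    also have "\<dots> \<le> cost M tau F T \<xi> + cost M tau F T \<eta>"
      by (rule cost_min_max_le[OF pi T F(1,2) x e])
    finally show "(INF \<xi>\<in>admissible M tau k. cost M tau F T \<xi>)
        + (INF \<xi>\<in>admissible M tau (Suc k - a). cost M tau F T \<xi>)
      \<le> cost M tau F T \<xi> + cost M tau F T \<eta>" .
  qed
  then have "enn2real (V k + V (Suc k - a)) \<le> enn2real (V (Suc k) + V (k - a))"
    using finite by (intro enn2real_mono) auto
  then show ?thesis
    using finite by (simp add: value_fn_def V_def[symmetric] enn2real_plus)
qed

theorem lemma2p9:
  fixes M :: "'w measure" and lam :: real and tau :: "nat \<Rightarrow> 'w \<Rightarrow> real"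
    and F :: "real \<Rightarrow> real" and T :: real
  assumes "poisson_interarrivals M lam tau"
    and "\<forall>x\<ge>0. F x \<ge> 0"
    and "strict_mono_on {0..} F"
    and "strictly_convex_on {0..} F"
    and "F 0 = 0"
    and "T \<ge> 0"
  shows "mono (\<lambda>k. G_fn M tau F k T)"
proof (rule mono_iff_le_Suc[THEN iffD2], intro allI)
  fix k :: nat
  define v where "v j = value_fn M tau F j T" for j
  define W where "W j = Min ((\<lambda>a. v (j - a) + F (real a)) ` {0..j})" for j
  have G: "G_fn M tau F j T = v j - W j" for j
    by (simp add: G_fn_def v_def W_def)
  have "W k \<in> (\<lambda>a. v (k - a) + F (real a)) ` {0..k}"
    unfolding W_def by (intro Min_in) auto
  then obtain a where a: "a \<le> k" "W k = v (k - a) + F (real a)"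
    by auto
  have "W (Suc k) \<le> v (Suc k - a) + F (real a)"
    unfolding W_def using a by (intro Min_le) auto
  moreover have "convex_on {0..} F"
    using assms(4) by (rule strictly_convex_on_imp_convex_on) simp
  then have "v k + v (Suc k - a) \<le> v (Suc k) + v (k - a)"
    unfolding v_def by (rule value_fn_submodular[OF assms(1,6) _ assms(2,5) a(1)])
  ultimately show "G_fn M tau F k T \<le> G_fn M tau F (Suc k) T"
    unfolding G using a(2) by linarith
qed

end
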